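(* Let $d\ge3$, $h\ge1$. Then $G(d,h)$ has a cyclic subgroup of order $(d-1)^h$.
   Context: Let $\mathcal{T}(d,h)$ be the rooted tree in which the root $0$ has $d$ children, every vertex at distance $1,\dots,h-1$ from the root has $d-1$ children, and the vertices at distance $h$ are leaves. Let $V$ be its vertex set, $A$ its adjacency matrix, $\Delta := dI-A$, and $\Lambda\subset\mathbb{Z}^V$ the lattice spanned by the rows of $\Delta$. Then $G(d,h):=\mathbb{Z}^V/\Lambda$. *)

theory Defs
  imports "HOL-Algebra.Algebra"
begin

text \<open>Vertices of T(d,h) are encoded as lists (paths from the root):
  the root is [], the children of the root are [i] with i < d, and the
  children of a non-root vertex xs at depth < h are xs @ [j] with j < d - 1.\<close>

definition tree_V :: "nat \<Rightarrow> nat \<Rightarrow> nat list set" where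
  "tree_V d h = {xs. length xs \<le> h \<and> (xs \<noteq> [] \<longrightarrow> hd xs < d)
                    \<and> (\<forall>i \<in> set (tl xs). i < d - 1)}"

definition tree_A :: "nat \<Rightarrow> nat \<Rightarrow> nat list \<Rightarrow> nat list \<Rightarrow> int" where
  "tree_A d h u v =
     (if u \<in> tree_V d h \<and> v \<in> tree_V d h \<and> ((\<exists>i. v = u @ [i]) \<or> (\<exists>i. u = v @ [i]))
      then 1 else 0)"

definition tree_Delta :: "nat \<Rightarrow> nat \<Rightarrow> nat list \<Rightarrow> nat list \<Rightarrow> int" where
  "tree_Delta d h u v =
     (if u \<in> tree_V d h \<and> v \<in> tree_V d h
      then (if u = v then int d else 0) - tree_A d h u v else 0)"

definition ZV_group :: "nat \<Rightarrow> nat \<Rightarrow> (nat list \<Rightarrow> int) monoid" where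
  "ZV_group d h = \<lparr>carrier = {f. \<forall>v. v \<notin> tree_V d h \<longrightarrow> f v = 0},
                   monoid.mult = (\<lambda>f g v. f v + g v),
                   one = (\<lambda>v. 0)\<rparr>"

definition tree_Lambda :: "nat \<Rightarrow> nat \<Rightarrow> (nat list \<Rightarrow> int) set" where
  "tree_Lambda d h = {(\<lambda>v. \<Sum>u\<in>tree_V d h. c u * tree_Delta d h u v) | c. True}"

definition sandpile_G :: "nat \<Rightarrow> nat \<Rightarrow> (nat list \<Rightarrow> int) set monoid" where
  "sandpile_G d h = ZV_group d h Mod tree_Lambda d h"

end

theory Submission
  imports Defs "HOL-Algebra.Multiplicative_Group"
begin

text \<open>Let \<open>q = d - 1\<close> and give a vertex at depth \<open>k\<close> the weight \<open>W k = 1 - q ^ (h + 1 - k)\<close>.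
  It satisfies \<open>d W k = W (k - 1) + q W (k + 1)\<close> for \<open>1 \<le> k \<le> h\<close>, and \<open>W (h + 1) = 0\<close>
  accounts for the leaves, so \<open>W \<Delta>\<close> vanishes off the root and equals \<open>-a q ^ h\<close> there, with
  \<open>a = d (d - 2) \<noteq> 0\<close>.  Hence \<open>q ^ h a e\<^sub>0 \<in> \<Lambda>\<close>, where \<open>e\<^sub>0\<close> is the unit vector at the root.
  Conversely, if \<open>k a e\<^sub>0 = c \<Delta>\<close>, pairing with \<open>W\<close> and using the symmetry of \<open>\<Delta>\<close> gives
  \<open>k W 0 = -c 0 q ^ h\<close>; as \<open>W 0 = 1 - q \<cdot> q ^ h\<close> is coprime to \<open>q ^ h\<close>, \<open>q ^ h\<close> divides \<open>k\<close>.
  So the class of \<open>a e\<^sub>0\<close> has order exactly \<open>q ^ h\<close> in \<open>G(d,h)\<close>.\<close>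

definition int_vectors :: "'a set \<Rightarrow> ('a \<Rightarrow> int) monoid" where
  "int_vectors V = \<lparr>carrier = {f. \<forall>v. v \<notin> V \<longrightarrow> f v = 0},
                    monoid.mult = (\<lambda>f g v. f v + g v), one = (\<lambda>v. 0)\<rparr>"

definition row_lattice :: "'a set \<Rightarrow> ('a \<Rightarrow> 'a \<Rightarrow> int) \<Rightarrow> ('a \<Rightarrow> int) set" where
  "row_lattice V M = {(\<lambda>v. \<Sum>u\<in>V. c u * M u v) | c. True}"

lemma row_lattice_memI: "(\<lambda>v. \<Sum>u\<in>V. c u * M u v) \<in> row_lattice V M"
  by (auto simp: row_lattice_def)

lemma comm_group_int_vectors: "comm_group (int_vectors V)"
proof (rule comm_groupI)
  fix x assume "x \<in> carrier (int_vectors V)"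
  then show "\<exists>y \<in> carrier (int_vectors V). y \<otimes>\<^bsub>int_vectors V\<^esub> x = \<one>\<^bsub>int_vectors V\<^esub>"
    by (intro bexI[of _ "\<lambda>v. - x v"]) (auto simp: int_vectors_def)
qed (auto simp: int_vectors_def)

lemma inv_int_vectors:
  assumes "x \<in> carrier (int_vectors V)"
  shows "inv\<^bsub>int_vectors V\<^esub> x = (\<lambda>v. - x v)"
proof -
  interpret comm_group "int_vectors V" by (rule comm_group_int_vectors)
  show ?thesis
    by (rule inv_equality) (use assms in \<open>auto simp: int_vectors_def\<close>)
qed

lemma pow_int_vectors: "x [^]\<^bsub>int_vectors V\<^esub> (n::nat) = (\<lambda>v. int n * x v)"
  by (induction n) (simp_all add: int_vectors_def algebra_simps)

lemma subgroup_row_lattice: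
  assumes M_outside: "\<And>u v. v \<notin> V \<Longrightarrow> M u v = 0"
  shows "subgroup (row_lattice V M) (int_vectors V)"
proof -
  interpret comm_group "int_vectors V" by (rule comm_group_int_vectors)
  have combination_in_carrier: "(\<lambda>v. \<Sum>u\<in>V. c u * M u v) \<in> carrier (int_vectors V)" for c
    by (simp add: int_vectors_def M_outside)
  show ?thesis
  proof (rule subgroupI)
    show "row_lattice V M \<subseteq> carrier (int_vectors V)"
      using combination_in_carrier by (auto simp: row_lattice_def)
    show "row_lattice V M \<noteq> {}"
      using row_lattice_memI by blast
  next
    fix x assume "x \<in> row_lattice V M"
    then obtain c where x: "x = (\<lambda>v. \<Sum>u\<in>V. c u * M u v)"
      by (auto simp: row_lattice_def)
    have "inv\<^bsub>int_vectors V\<^esub> x = (\<lambda>v. \<Sum>u\<in>V. - c u * M u v)"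
      using combination_in_carrier by (simp add: x inv_int_vectors sum_negf)
    then show "inv\<^bsub>int_vectors V\<^esub> x \<in> row_lattice V M"
      using row_lattice_memI[of "\<lambda>u. - c u"] by simp
  next
    fix x y assume "x \<in> row_lattice V M" "y \<in> row_lattice V M"
    then obtain c c' where x: "x = (\<lambda>v. \<Sum>u\<in>V. c u * M u v)"
        and y: "y = (\<lambda>v. \<Sum>u\<in>V. c' u * M u v)"
      by (auto simp: row_lattice_def)
    have "x \<otimes>\<^bsub>int_vectors V\<^esub> y = (\<lambda>v. \<Sum>u\<in>V. (c u + c' u) * M u v)"
      by (simp add: int_vectors_def x y sum.distrib distrib_right)
    then show "x \<otimes>\<^bsub>int_vectors V\<^esub> y \<in> row_lattice V M"
      using row_lattice_memI[of "\<lambda>u. c u + c' u"] by simp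
  qed
qed

lemma normal_row_lattice:
  "(\<And>u v. v \<notin> V \<Longrightarrow> M u v = 0) \<Longrightarrow> row_lattice V M \<lhd> int_vectors V"
  by (rule comm_group.subgroup_imp_normal[OF comm_group_int_vectors subgroup_row_lattice])

lemma scaled_unit_vector_in_row_lattice:
  fixes M :: "'a \<Rightarrow> 'a \<Rightarrow> int" and w :: "'a \<Rightarrow> int"
  assumes "N dvd k" and "r \<in> V" and M_outside: "\<And>u v. v \<notin> V \<Longrightarrow> M u v = 0"
    and w: "\<And>v. v \<in> V \<Longrightarrow> (\<Sum>u\<in>V. w u * M u v) = (if v = r then - (a * int N) else 0)"
  shows "(\<lambda>v. if v = r then int k * a else 0) \<in> row_lattice V M"
proof -
  obtain m where k: "k = N * m"
    using assms(1) ..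
  have "(\<lambda>v. if v = r then int k * a else 0) = (\<lambda>v. \<Sum>u\<in>V. (- int m * w u) * M u v)"
  proof
    fix v
    show "(if v = r then int k * a else 0) = (\<Sum>u\<in>V. (- int m * w u) * M u v)"
    proof (cases "v \<in> V")
      case True
      have "(\<Sum>u\<in>V. (- int m * w u) * M u v) = - int m * (\<Sum>u\<in>V. w u * M u v)"
        by (simp add: sum_distrib_left mult.assoc)
      also have "\<dots> = (if v = r then int k * a else 0)"
        using True by (simp add: w k)
      finally show ?thesis
        by (rule sym)
    next
      case False
      then show ?thesis
        using \<open>r \<in> V\<close> by (auto simp: M_outside)
    qed
  qed
  then show ?thesis
    by (simp only: row_lattice_memI)
qed

lemma dvd_of_scaled_unit_vector_in_row_lattice:
  fixes M :: "'a \<Rightarrow> 'a \<Rightarrow> int" and w :: "'a \<Rightarrow> int"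
  assumes "(\<lambda>v. if v = r then int k * a else 0) \<in> row_lattice V M"
    and "finite V" and "r \<in> V" and M_sym: "\<And>u v. M u v = M v u"
    and w: "\<And>v. v \<in> V \<Longrightarrow> (\<Sum>u\<in>V. w u * M u v) = (if v = r then - (a * int N) else 0)"
    and "a \<noteq> 0" and "coprime (w r) (int N)"
  shows "N dvd k"
proof -
  obtain c where c: "\<And>v. (if v = r then int k * a else 0) = (\<Sum>u\<in>V. c u * M u v)"
    using assms(1) by (auto simp: row_lattice_def fun_eq_iff)
  have "a * (int k * w r) = (\<Sum>v\<in>V. if v = r then w v * (int k * a) else 0)"
    using assms(2,3) by (simp add: sum.delta)
  also have "\<dots> = (\<Sum>v\<in>V. w v * (if v = r then int k * a else 0))"
    by (rule sum.cong) simp_all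
  also have "\<dots> = (\<Sum>v\<in>V. \<Sum>u\<in>V. c u * (w v * M v u))"
    by (simp add: c sum_distrib_left M_sym ac_simps)
  also have "\<dots> = (\<Sum>u\<in>V. c u * (\<Sum>v\<in>V. w v * M v u))"
    by (subst sum.swap) (simp add: sum_distrib_left)
  also have "\<dots> = (\<Sum>u\<in>V. if u = r then - (c r * a * int N) else 0)"
    by (rule sum.cong) (simp_all add: w)
  also have "\<dots> = a * - (c r * int N)"
    using assms(2,3) by (simp add: sum.delta)
  finally have "int k * w r = - (c r * int N)"
    using \<open>a \<noteq> 0\<close> by (metis mult_left_cancel)
  then have "int N dvd int k * w r"
    by (metis dvd_minus_iff dvd_triv_right)
  then show ?thesis
    using \<open>coprime (w r) (int N)\<close> by (simp add: coprime_dvd_mult_left_iff coprime_commute)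
qed

lemma (in normal) ord_FactGroup_rcos:
  assumes x: "x \<in> carrier G" and "\<And>n::nat. x [^] n \<in> H \<longleftrightarrow> N dvd n"
  shows "group.ord (G Mod H) (H #> x) = N"
proof -
  interpret Q: group "G Mod H" by (rule factorgroup_is_group)
  have "H #> x [^] n = H \<longleftrightarrow> x [^] n \<in> H" for n :: nat
    using rcos_const[OF is_group] rcos_self[OF nat_pow_closed[OF x] is_subgroup] by blast
  then have "(H #> x) [^]\<^bsub>G Mod H\<^esub> n = \<one>\<^bsub>G Mod H\<^esub> \<longleftrightarrow> N dvd n" for n :: nat
    by (simp add: FactGroup_pow[OF x] assms(2))
  moreover have "H #> x \<in> carrier (G Mod H)"
    using x by (simp add: carrier_FactGroup)
  ultimately show ?thesis
    using Q.ord_unique by blast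
qed

lemma ord_scaled_unit_vector_mod_row_lattice:
  fixes M :: "'a \<Rightarrow> 'a \<Rightarrow> int" and w :: "'a \<Rightarrow> int"
  assumes "finite V" and "r \<in> V"
    and M_sym: "\<And>u v. M u v = M v u" and M_outside: "\<And>u v. v \<notin> V \<Longrightarrow> M u v = 0"
    and w: "\<And>v. v \<in> V \<Longrightarrow> (\<Sum>u\<in>V. w u * M u v) = (if v = r then - (a * int N) else 0)"
    and "a \<noteq> 0" and "coprime (w r) (int N)"
  shows "group.ord (int_vectors V Mod row_lattice V M)
           (row_lattice V M #>\<^bsub>int_vectors V\<^esub> (\<lambda>v. if v = r then a else 0)) = N"
proof (rule normal.ord_FactGroup_rcos[OF normal_row_lattice[OF M_outside]])
  show "(\<lambda>v. if v = r then a else 0) \<in> carrier (int_vectors V)"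
    using \<open>r \<in> V\<close> by (auto simp: int_vectors_def)
  have "(\<lambda>v. if v = r then a else 0) [^]\<^bsub>int_vectors V\<^esub> n = (\<lambda>v. if v = r then int n * a else 0)"
    for n :: nat
    by (simp add: pow_int_vectors fun_eq_iff)
  then show "(\<lambda>v. if v = r then a else 0) [^]\<^bsub>int_vectors V\<^esub> n \<in> row_lattice V M \<longleftrightarrow> N dvd n"
    for n :: nat
    using scaled_unit_vector_in_row_lattice[OF _ \<open>r \<in> V\<close> M_outside w]
      dvd_of_scaled_unit_vector_in_row_lattice[OF _ assms(1,2) M_sym w assms(6,7)]
    by auto
qed

lemma (in group) cyclic_subgroup_of_ord:
  assumes "g \<in> carrier G" and "ord g > 0"
  shows "\<exists>H. subgroup H G \<and> (\<exists>g \<in> carrier G. H = generate G {g}) \<and> finite H \<and> card H = ord g"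
proof (intro exI conjI bexI)
  show "subgroup (generate G {g}) G"
    using assms(1) by (intro generate_is_subgroup) simp
  show "card (generate G {g}) = ord g"
    using generate_pow_card[OF assms(1)] by simp
  then show "finite (generate G {g})"
    using assms(2) by (intro card_ge_0_finite) simp
qed (use assms(1) in simp_all)

lemma finite_tree_V: "finite (tree_V d h)"
proof (rule finite_subset)
  show "tree_V d h \<subseteq> {xs. set xs \<subseteq> {..<d} \<and> length xs \<le> h}"
  proof
    fix xs assume "xs \<in> tree_V d h"
    then show "xs \<in> {xs. set xs \<subseteq> {..<d} \<and> length xs \<le> h}"
      by (cases xs) (fastforce simp: tree_V_def)+
  qed
  show "finite {xs. set xs \<subseteq> {..<d} \<and> length xs \<le> h}"
    by (rule finite_lists_length_le) simp
qed

lemma Nil_in_tree_V: "[] \<in> tree_V d h"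
  by (simp add: tree_V_def)

lemma butlast_in_tree_V: "v \<in> tree_V d h \<Longrightarrow> butlast v \<in> tree_V d h"
  by (cases v; cases "tl v" rule: rev_cases) (auto simp: tree_V_def)

definition branching :: "nat \<Rightarrow> nat list \<Rightarrow> nat" where
  "branching d v = (if v = [] then d else d - 1)"

lemma snoc_in_tree_V_iff:
  "v \<in> tree_V d h \<Longrightarrow> v @ [i] \<in> tree_V d h \<longleftrightarrow> length v < h \<and> i < branching d v"
  by (cases v) (auto simp: tree_V_def branching_def)

lemma tree_Delta_sym: "tree_Delta d h u v = tree_Delta d h v u"
  unfolding tree_Delta_def tree_A_def by auto

lemma tree_Delta_outside: "v \<notin> tree_V d h \<Longrightarrow> tree_Delta d h u v = 0"
  unfolding tree_Delta_def by auto

lemma sum_tree_Delta: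
  assumes v: "v \<in> tree_V d h"
  shows "(\<Sum>u\<in>tree_V d h. f u * tree_Delta d h u v) =
    int d * f v - (if v = [] then 0 else f (butlast v))
      - (if length v < h then \<Sum>i<branching d v. f (v @ [i]) else 0)"
proof -
  let ?V = "tree_V d h"
  define parent where "parent = ?V \<inter> {u. \<exists>i. v = u @ [i]}"
  define children where "children = ?V \<inter> {u. \<exists>i. u = v @ [i]}"
  have parent: "parent = (if v = [] then {} else {butlast v})"
    using butlast_in_tree_V[OF v] by (auto simp: parent_def) (metis append_butlast_last_id)
  have children: "children = (if length v < h then (\<lambda>i. v @ [i]) ` {..<branching d v} else {})"
    using snoc_in_tree_V_iff[OF v] by (auto simp: children_def)
  have "(\<Sum>u\<in>?V. f u * tree_Delta d h u v)
      = (\<Sum>u\<in>?V. if u = v then int d * f u else 0) - (\<Sum>u\<in>?V. if u \<in> parent \<union> children then f u else 0)"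
    unfolding sum_subtractf[symmetric]
    by (rule sum.cong) (use v in \<open>auto simp: tree_Delta_def tree_A_def parent_def children_def\<close>)
  also have "\<dots> = int d * f v - (\<Sum>u\<in>parent \<union> children. f u)"
    using finite_tree_V v
    by (simp add: sum.delta sum.inter_restrict Int_absorb1 parent_def children_def flip: Int_Un_distrib)
  also have "(\<Sum>u\<in>parent \<union> children. f u) = (\<Sum>u\<in>parent. f u) + (\<Sum>u\<in>children. f u)"
    by (rule sum.union_disjoint) (auto simp: parent children dest: arg_cong[of _ _ length])
  finally show ?thesis
    by (simp add: parent children sum.reindex inj_on_def)
qed

definition depth_weight :: "nat \<Rightarrow> nat \<Rightarrow> nat \<Rightarrow> int" where
  "depth_weight d h k = 1 - (int d - 1) ^ (h + 1 - k)"

lemma depth_weight_recurrence: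
  assumes "1 \<le> k" and "k \<le> h"
  shows "int d * depth_weight d h k
    = depth_weight d h (k - 1) + (int d - 1) * depth_weight d h (Suc k)"
proof -
  define q where "q = int d - 1"
  then have d: "int d = q + 1"
    by simp
  obtain m where "h + 1 - k = Suc m" "h + 1 - (k - 1) = Suc (Suc m)" "h + 1 - Suc k = m"
    using assms by (intro that[of "h - k"]) auto
  then show ?thesis
    unfolding depth_weight_def q_def[symmetric] by (simp add: d algebra_simps)
qed

lemma depth_weight_beyond_leaves: "depth_weight d h (Suc h) = 0"
  by (simp add: depth_weight_def)

lemma depth_weight_root:
  "int d * (depth_weight d h 0 - depth_weight d h 1) = - (int d * (int d - 2) * (int d - 1) ^ h)"
proof -
  define q where "q = int d - 1"
  then have d: "int d = q + 1"
    by simp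
  show ?thesis
    unfolding depth_weight_def q_def[symmetric] by (simp add: d algebra_simps)
qed

lemma sum_depth_weight_tree_Delta:
  assumes v: "v \<in> tree_V d h" and "d \<ge> 1" and "h \<ge> 1"
  shows "(\<Sum>u\<in>tree_V d h. depth_weight d h (length u) * tree_Delta d h u v)
    = (if v = [] then - (int d * (int d - 2) * (int d - 1) ^ h) else 0)"
proof -
  let ?W = "depth_weight d h"
  have "length v \<le> h"
    using v by (simp add: tree_V_def)
  then have children: "(if length v < h then \<Sum>i<branching d v. ?W (length (v @ [i])) else 0)
      = int (branching d v) * ?W (Suc (length v))"
    by (auto simp: depth_weight_beyond_leaves)
  show ?thesis
  proof (cases "v = []")
    case True
    then show ?thesis
      using sum_tree_Delta[OF v, of "\<lambda>u. ?W (length u)"] children depth_weight_root[of d h]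
      by (simp add: branching_def right_diff_distrib)
  next
    case False
    then have "1 \<le> length v"
      by (simp add: Suc_le_eq)
    then have "int d * ?W (length v) - ?W (length v - 1) - (int d - 1) * ?W (Suc (length v)) = 0"
      using depth_weight_recurrence \<open>length v \<le> h\<close> by simp
    then show ?thesis
      using sum_tree_Delta[OF v, of "\<lambda>u. ?W (length u)"] children False \<open>d \<ge> 1\<close>
      by (simp add: branching_def length_butlast of_nat_diff)
  qed
qed

lemma coprime_depth_weight_root: "coprime (depth_weight d h 0) ((int d - 1) ^ h)"
proof (rule coprimeI)
  fix c assume "c dvd depth_weight d h 0" "c dvd (int d - 1) ^ h"
  then have "c dvd depth_weight d h 0 + (int d - 1) * (int d - 1) ^ h"
    by simp
  then show "is_unit c"
    by (simp add: depth_weight_def)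
qed

lemma ZV_group_eq_int_vectors: "ZV_group d h = int_vectors (tree_V d h)"
  by (simp add: ZV_group_def int_vectors_def)

lemma tree_Lambda_eq_row_lattice: "tree_Lambda d h = row_lattice (tree_V d h) (tree_Delta d h)"
  by (simp add: tree_Lambda_def row_lattice_def)

lemma group_sandpile_G: "group (sandpile_G d h)"
  unfolding sandpile_G_def ZV_group_eq_int_vectors tree_Lambda_eq_row_lattice
  by (rule normal.factorgroup_is_group[OF normal_row_lattice[OF tree_Delta_outside]])

lemma ord_root_class_sandpile_G:
  assumes "d \<ge> 3" and "h \<ge> 1"
  shows "group.ord (sandpile_G d h)
           (tree_Lambda d h #>\<^bsub>ZV_group d h\<^esub> (\<lambda>v. if v = [] then int d * (int d - 2) else 0))
         = (d - 1) ^ h"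
proof -
  have N: "int ((d - 1) ^ h) = (int d - 1) ^ h"
    using assms by (simp add: of_nat_diff)
  show ?thesis
    unfolding sandpile_G_def ZV_group_eq_int_vectors tree_Lambda_eq_row_lattice
    by (rule ord_scaled_unit_vector_mod_row_lattice[OF finite_tree_V Nil_in_tree_V tree_Delta_sym
          tree_Delta_outside, where w = "\<lambda>u. depth_weight d h (length u)"])
      (use assms in \<open>simp_all add: N sum_depth_weight_tree_Delta coprime_depth_weight_root
          del: coprime_power_right_iff\<close>)
qed

theorem lemma8p18:
  fixes d h :: nat
  assumes "d \<ge> 3" and "h \<ge> 1"
  shows "\<exists>H. subgroup H (sandpile_G d h)
            \<and> (\<exists>g \<in> carrier (sandpile_G d h). H = generate (sandpile_G d h) {g})
            \<and> finite H \<and> card H = (d - 1) ^ h"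
proof -
  let ?g = "tree_Lambda d h #>\<^bsub>ZV_group d h\<^esub> (\<lambda>v. if v = [] then int d * (int d - 2) else 0)"
  interpret group "sandpile_G d h"
    by (rule group_sandpile_G)
  have g: "?g \<in> carrier (sandpile_G d h)"
    by (auto simp: sandpile_G_def carrier_FactGroup ZV_group_eq_int_vectors int_vectors_def
        Nil_in_tree_V)
  show ?thesis
    using cyclic_subgroup_of_ord[OF g] ord_root_class_sandpile_G[OF assms] assms by simp
qed

end
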